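(* Let $\mathcal{R}$ be a finite valuation ring with residue field of cardinality $q$ and with uniformizer of nilpotency degree $r$ (so $|\mathcal{R}|=q^r$). Let $\mathcal{SP}_\mathcal{R}$ be the sum-product graph on vertex set $\mathcal{R}\times\mathcal{R}$, in which vertices $(a,b)$ and $(c,d)$ are adjacent if and only if $a+c=bd$ (loops allowed). Then $\mathcal{SP}_\mathcal{R}$ is a $\left(q^{2r},\,q^r,\,\sqrt{2rq^{2r-1}}\right)$-graph; that is, it has $q^{2r}$ vertices, it is $q^r$-regular, and its second eigenvalue is at most $\sqrt{2rq^{2r-1}}$.
   Context: A finite valuation ring is a finite commutative ring with identity that is local (has a unique maximal ideal) and principal (every ideal is principal); its maximal ideal is generated by a non-unit $z$ (a uniformizer), the residue field $\mathcal{R}/(z)$ has $q$ elements, and $r$ is the least integer with $z^r=0$. The adjacency matrix $M$ of $\mathcal{SP}_\mathcal{R}$ is the symmetric $0/1$ matrix indexed by $\mathcal{R}\times\mathcal{R}$ with $M_{(a,b),(c,d)}=1$ iff $a+c=bd$ (diagonal entries may be $1$). If $\lambda_1\ge\lambda_2\ge\dots\ge\lambda_n$ are the eigenvalues of $M$, the second eigenvalue is $\max\{\lambda_2,-\lambda_n\}$. An $(n,d,\lambda)$-graph is a $d$-regular graph on $n$ vertices whose second eigenvalue is at most $\lambda$. *)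

theory Defs
  imports "HOL-Analysis.Analysis" "HOL-Computational_Algebra.Polynomial" "HOL-Library.Multiset"
begin

definition ring_ideal :: "'a::comm_ring_1 set \<Rightarrow> bool" where
  "ring_ideal I \<longleftrightarrow> 0 \<in> I \<and> (\<forall>x\<in>I. \<forall>y\<in>I. x + y \<in> I) \<and> (\<forall>x\<in>I. \<forall>a. a * x \<in> I)"

definition principal_ideal :: "'a::comm_ring_1 \<Rightarrow> 'a set" where
  "principal_ideal g = {a * g | a. True}"

definition maximal_ideal :: "'a::comm_ring_1 set \<Rightarrow> bool" where
  "maximal_ideal I \<longleftrightarrow> ring_ideal I \<and> I \<noteq> UNIV \<and>
     (\<forall>J. ring_ideal J \<and> I \<subseteq> J \<longrightarrow> J = I \<or> J = UNIV)"

definition finite_valuation_ring :: "'a::{comm_ring_1,finite} itself \<Rightarrow> bool" where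
  "finite_valuation_ring _ \<longleftrightarrow>
     (\<exists>!I::'a set. maximal_ideal I) \<and>
     (\<forall>I::'a set. ring_ideal I \<longrightarrow> (\<exists>g. I = principal_ideal g))"

text \<open>Cosets of an ideal; the residue ring R/I is the set of cosets.\<close>
definition quotient_cosets :: "'a::comm_ring_1 set \<Rightarrow> 'a set set" where
  "quotient_cosets I = (\<lambda>a. {a + x | x. x \<in> I}) ` UNIV"

definition sum_product_adj :: "'a::comm_ring_1 \<times> 'a \<Rightarrow> 'a \<times> 'a \<Rightarrow> bool" where
  "sum_product_adj v w \<longleftrightarrow> fst v + fst w = snd v * snd w"

definition sum_product_matrix :: "real ^ ('a::{comm_ring_1,finite} \<times> 'a) ^ ('a \<times> 'a)" where
  "sum_product_matrix = (\<chi> v w. if sum_product_adj v w then 1 else 0)"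

definition charpoly :: "real ^ 'n ^ 'n \<Rightarrow> real poly" where
  "charpoly M = det (\<chi> i j. (if i = j then [:0, 1:] else 0) - [:M $ i $ j:])"

definition eigenvalues_desc :: "real ^ 'n ^ 'n \<Rightarrow> real list" where
  "eigenvalues_desc M = rev (sorted_list_of_multiset (proots (charpoly M)))"

definition second_eigenvalue :: "real ^ 'n ^ 'n \<Rightarrow> real" where
  "second_eigenvalue M = max (eigenvalues_desc M ! 1) (- last (eigenvalues_desc M))"

end

theory Submission
  imports Defs
begin

text \<open>Vertices (c, d) and (c', d') of the sum-product graph have exactly
  |{x. x (d' - d) = c' - c}| common neighbours, and this count is the kernel of the quadratic
  form |M f|^2. In a finite valuation ring with uniformizer z it telescopes into a combination,
  with coefficients |Ann(z^k)|, of the indicators that the two vertices are congruent modulo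
  (z^k) x (z^k), minus those for (z^k) x (z^(k+1)). The subtracted forms are sums of squares over
  cosets, the k = 0 form vanishes on vectors orthogonal to the constants, and the remaining ones
  are bounded by their degrees. Hence |M f|^2 <= r q^(2r-1) |f|^2 for f orthogonal to the
  constants: every eigenvalue other than the degree q^r has absolute value at most
  sqrt (r q^(2r-1)), and q^r is a simple root of the characteristic polynomial whenever it
  exceeds this bound. This is sharper than the stated bound by a factor sqrt 2.\<close>

section \<open>Ideals of a commutative ring\<close>

lemma mem_principal_ideal: "x \<in> principal_ideal g \<longleftrightarrow> (\<exists>t. x = t * g)"
  unfolding principal_ideal_def by auto

lemma ring_ideal_principal_ideal: "ring_ideal (principal_ideal g)"
  unfolding ring_ideal_def
proof (intro conjI ballI allI)
  show "0 \<in> principal_ideal g"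
    unfolding mem_principal_ideal by (rule exI[of _ 0]) simp
next
  fix x y assume "x \<in> principal_ideal g" "y \<in> principal_ideal g"
  then show "x + y \<in> principal_ideal g"
    unfolding mem_principal_ideal by (metis distrib_right)
next
  fix x a assume "x \<in> principal_ideal g"
  then show "a * x \<in> principal_ideal g"
    unfolding mem_principal_ideal by (metis mult.assoc)
qed

lemma ring_ideal_add: "ring_ideal J \<Longrightarrow> x \<in> J \<Longrightarrow> y \<in> J \<Longrightarrow> x + y \<in> J"
  unfolding ring_ideal_def by blast

lemma ring_ideal_uminus: "ring_ideal J \<Longrightarrow> x \<in> J \<Longrightarrow> - x \<in> J"
  unfolding ring_ideal_def by (metis mult_minus1)

lemma ring_ideal_diff: "ring_ideal J \<Longrightarrow> x \<in> J \<Longrightarrow> y \<in> J \<Longrightarrow> x - y \<in> J"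
  using ring_ideal_add ring_ideal_uminus by (metis diff_conv_add_uminus)

lemma ring_ideal_minus_commute: "ring_ideal J \<Longrightarrow> a - b \<in> J \<longleftrightarrow> b - a \<in> J"
  using ring_ideal_uminus by (metis minus_diff_eq)

lemma coset_eq_iff:
  assumes "ring_ideal J"
  shows "{a + x |x. x \<in> J} = {b + x |x. x \<in> J} \<longleftrightarrow> a - b \<in> J"
proof
  assume eq: "{a + x |x. x \<in> J} = {b + x |x. x \<in> J}"
  have "a \<in> {a + x |x. x \<in> J}"
    using assms unfolding ring_ideal_def by (intro CollectI exI[of _ 0]) simp
  then show "a - b \<in> J" unfolding eq by auto
next
  assume ab: "a - b \<in> J"
  have "a + x = b + ((a - b) + x)" "b + x = a + (x - (a - b))" for x by simp_all
  then show "{a + x |x. x \<in> J} = {b + x |x. x \<in> J}"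
    using ring_ideal_add[OF assms ab] ring_ideal_diff[OF assms _ ab] by blast
qed

lemma card_coset: "card {a + x |x. x \<in> J} = card (J :: 'a::ab_group_add set)"
proof -
  have "{a + x |x. x \<in> J} = (+) a ` J" by auto
  then show ?thesis by (simp add: card_image)
qed

lemma card_UNIV_eq_card_cosets_mult:
  fixes J :: "'a::{comm_ring_1,finite} set"
  assumes "ring_ideal J"
  shows "CARD('a) = card (quotient_cosets J) * card J"
proof -
  let ?coset = "\<lambda>a. {a + x |x. x \<in> J}"
  have fiber: "{a. ?coset a = ?coset b} = ?coset b" for b
    using coset_eq_iff[OF assms] by (auto intro!: exI[of _ "_ - b"])
  have "CARD('a) = (\<Sum>C\<in>quotient_cosets J. card {a. ?coset a = C})"
    unfolding quotient_cosets_def using card_eq_sum sum.image_gen[of UNIV "\<lambda>_. 1::nat" ?coset]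
    by simp
  also have "\<dots> = (\<Sum>C\<in>quotient_cosets J. card J)"
    unfolding quotient_cosets_def by (intro sum.cong) (auto simp: fiber card_coset)
  finally show ?thesis by simp
qed

lemma card_fiber_mult_right: "card {x. x * c = e * c} = card {x. x * c = (0::'a::comm_ring_1)}"
proof -
  have "{x. x * c = e * c} = (\<lambda>t. t + e) ` {x. x * c = 0}"
    by (auto simp: algebra_simps intro!: image_eqI[of _ _ "_ - e"])
  then show ?thesis by (simp add: card_image)
qed

lemma maximal_ideal_superset:
  fixes J :: "'a::{comm_ring_1,finite} set"
  assumes "ring_ideal J" "J \<noteq> UNIV"
  shows "\<exists>K. maximal_ideal K \<and> J \<subseteq> K"
proof -
  obtain K where K: "K \<in> {K. ring_ideal K \<and> K \<noteq> UNIV}" "J \<subseteq> K"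
      and max: "\<forall>K'\<in>{K. ring_ideal K \<and> K \<noteq> UNIV}. K \<subseteq> K' \<longrightarrow> K = K'"
    using finite_has_maximal2[of "{K. ring_ideal K \<and> K \<noteq> UNIV}" J] assms by auto
  then have "maximal_ideal K" unfolding maximal_ideal_def by blast
  with K show ?thesis by blast
qed

section \<open>Finite valuation rings\<close>

locale finite_valuation =
  fixes z :: "'a::{comm_ring_1,finite}"
  assumes finite_valuation_ring: "finite_valuation_ring TYPE('a)"
    and maximal_ideal_z: "maximal_ideal (principal_ideal z)"
begin

definition q :: nat where "q = card (quotient_cosets (principal_ideal z))"

definition r :: nat where "r = (LEAST k. z ^ k = 0)"

definition pow_ideal :: "nat \<Rightarrow> 'a set" where "pow_ideal k = principal_ideal (z ^ k)"

definition pow_ann :: "nat \<Rightarrow> 'a set" where "pow_ann k = {d. d * z ^ k = 0}"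

lemma ring_ideal_z: "ring_ideal (principal_ideal z)"
  and principal_ideal_z_neq_UNIV: "principal_ideal z \<noteq> UNIV"
  using maximal_ideal_z unfolding maximal_ideal_def by auto

lemma unit_if_notin_principal_ideal_z:
  assumes "x \<notin> principal_ideal z"
  shows "\<exists>y. x * y = 1"
proof (cases "principal_ideal x = UNIV")
  case True
  then have "1 \<in> principal_ideal x" by simp
  then show ?thesis unfolding mem_principal_ideal by (auto simp: mult.commute)
next
  case False
  then obtain K where "maximal_ideal K" "principal_ideal x \<subseteq> K"
    using maximal_ideal_superset ring_ideal_principal_ideal by blast
  moreover have "K = principal_ideal z"
    using \<open>maximal_ideal K\<close> maximal_ideal_z finite_valuation_ring
    unfolding finite_valuation_ring_def by blast
  moreover have "x \<in> principal_ideal x" unfolding mem_principal_ideal by (rule exI[of _ 1]) simp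
  ultimately show ?thesis using assms by blast
qed

lemma one_notin_principal_ideal_z: "1 \<notin> principal_ideal z"
  using ring_ideal_z principal_ideal_z_neq_UNIV unfolding ring_ideal_def
  by (metis UNIV_eq_I mult.right_neutral)

text \<open>Powers of \<open>z\<close> must repeat, \<open>z ^ i = z ^ (i + m)\<close> with \<open>m > 0\<close>; then
  \<open>z ^ i * (1 - z ^ m) = 0\<close> and \<open>1 - z ^ m\<close> is a unit since \<open>1\<close> is not in the maximal ideal.\<close>
lemma z_nilpotent: "\<exists>k. z ^ k = 0"
proof -
  have "\<not> inj (\<lambda>k::nat. z ^ k)"
  proof
    assume "inj (\<lambda>k::nat. z ^ k)"
    then have "finite (UNIV :: nat set)" by (rule finite_imageD[rotated]) simp
    then show False by simp
  qed
  then obtain i j :: nat where "z ^ i = z ^ j" "i \<noteq> j" unfolding inj_def by blast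
  then have "\<exists>i m. z ^ i = z ^ (i + Suc m)"
  proof (cases "i < j")
    case True
    then show ?thesis using \<open>z ^ i = z ^ j\<close> by (intro exI[of _ i] exI[of _ "j - Suc i"]) simp
  next
    case False
    then have "j < i" using \<open>i \<noteq> j\<close> by simp
    then show ?thesis using \<open>z ^ i = z ^ j\<close> by (intro exI[of _ j] exI[of _ "i - Suc j"]) simp
  qed
  then obtain i m where ij: "z ^ i = z ^ (i + Suc m)" by blast
  have "z ^ Suc m \<in> principal_ideal z"
    unfolding mem_principal_ideal by (rule exI[of _ "z ^ m"]) (simp add: mult.commute)
  then have "1 - z ^ Suc m \<notin> principal_ideal z"
    using ring_ideal_add[OF ring_ideal_z, of "1 - z ^ Suc m" "z ^ Suc m"]
      one_notin_principal_ideal_z by auto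
  then obtain w where w: "(1 - z ^ Suc m) * w = 1" using unit_if_notin_principal_ideal_z by blast
  have "z ^ i * (1 - z ^ Suc m) = z ^ i - z ^ (i + Suc m)"
    by (simp only: right_diff_distrib mult_1_right power_add)
  then have "z ^ i * (1 - z ^ Suc m) * w = 0" using ij by simp
  then have "z ^ i = 0" using w by (simp only: mult.assoc mult_1_right)
  then show ?thesis by blast
qed

lemma z_power_r: "z ^ r = 0"
  unfolding r_def using z_nilpotent by (rule LeastI_ex)

lemma z_power_neq_0: "k < r \<Longrightarrow> z ^ k \<noteq> 0"
  unfolding r_def by (rule not_less_Least)

lemma r_pos: "0 < r"
  using z_power_r by (cases r) auto

lemma z_power_eq_0: "r \<le> k \<Longrightarrow> z ^ k = 0"
  using z_power_r by (metis le_add_diff_inverse mult_zero_left power_add)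

lemma mem_pow_ideal: "x \<in> pow_ideal k \<longleftrightarrow> (\<exists>t. x = t * z ^ k)"
  unfolding pow_ideal_def mem_principal_ideal ..

lemma ring_ideal_pow_ideal: "ring_ideal (pow_ideal k)"
  unfolding pow_ideal_def by (rule ring_ideal_principal_ideal)

lemma pow_ideal_antimono: "k \<le> k' \<Longrightarrow> pow_ideal k' \<subseteq> pow_ideal k"
proof
  fix x assume "k \<le> k'" "x \<in> pow_ideal k'"
  then obtain t where "x = t * z ^ (k' - k) * z ^ k"
    unfolding mem_pow_ideal by (auto simp: mult.assoc simp flip: power_add)
  then show "x \<in> pow_ideal k" unfolding mem_pow_ideal by blast
qed

lemma pow_ideal_0: "pow_ideal 0 = UNIV"
  unfolding pow_ideal_def by (auto simp: mem_principal_ideal)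

lemma pow_ideal_1: "pow_ideal 1 = principal_ideal z"
  unfolding pow_ideal_def by simp

lemma pow_ideal_eq_0: "r \<le> k \<Longrightarrow> pow_ideal k = {0}"
  using z_power_eq_0 by (auto simp: mem_pow_ideal)

lemma pow_ann_subset_pow_ideal_1:
  assumes "k < r"
  shows "pow_ann k \<subseteq> pow_ideal 1"
proof
  fix d assume d: "d \<in> pow_ann k"
  show "d \<in> pow_ideal 1"
  proof (rule ccontr)
    assume "d \<notin> pow_ideal 1"
    then obtain e where "d * e = 1" using unit_if_notin_principal_ideal_z pow_ideal_1 by auto
    then have "z ^ k = e * (d * z ^ k)" by (metis mult.assoc mult.commute mult_1)
    then show False using d z_power_neq_0[OF assms] unfolding pow_ann_def by simp
  qed
qed

lemma card_pow_ann_pos: "0 < card (pow_ann k)"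
  unfolding pow_ann_def by (auto simp: card_gt_0_iff intro: exI[of _ 0])

lemma card_UNIV_eq_pow_ann_mult: "CARD('a) = card (pow_ann k) * card (pow_ideal k)"
proof -
  have img: "(\<lambda>x. x * z ^ k) ` UNIV = pow_ideal k" by (auto simp: mem_pow_ideal)
  have "CARD('a) = (\<Sum>y\<in>pow_ideal k. card {x. x * z ^ k = y})"
    using sum.image_gen[of UNIV "\<lambda>_. 1::nat" "\<lambda>x. x * z ^ k"] unfolding img by simp
  also have "\<dots> = (\<Sum>y\<in>pow_ideal k. card (pow_ann k))"
    unfolding pow_ann_def using card_fiber_mult_right by (intro sum.cong) (auto simp: mem_pow_ideal)
  finally show ?thesis by simp
qed

lemma image_mult_pow_ideal_1: "(\<lambda>x. x * z ^ k) ` pow_ideal 1 = pow_ideal (Suc k)"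
proof (intro set_eqI iffI)
  fix y assume "y \<in> (\<lambda>x. x * z ^ k) ` pow_ideal 1"
  then obtain x where "x \<in> pow_ideal 1" "y = x * z ^ k" by auto
  then obtain t where "y = t * z * z ^ k" unfolding mem_pow_ideal by auto
  then show "y \<in> pow_ideal (Suc k)" unfolding mem_pow_ideal by (auto simp: mult.assoc)
next
  fix y assume "y \<in> pow_ideal (Suc k)"
  then obtain t where "y = t * z ^ Suc k" unfolding mem_pow_ideal by blast
  then have "y = (t * z) * z ^ k" by (simp add: mult.assoc)
  moreover have "t * z \<in> pow_ideal 1" unfolding mem_pow_ideal by auto
  ultimately show "y \<in> (\<lambda>x. x * z ^ k) ` pow_ideal 1" by blast
qed

lemma fiber_mult_pow_ideal_1:
  assumes "k < r"
  shows "{x \<in> pow_ideal 1. x * z ^ k = t * z * z ^ k} = {x. x * z ^ k = t * z * z ^ k}"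
proof -
  have "x \<in> pow_ideal 1" if "x * z ^ k = t * z * z ^ k" for x
  proof -
    have "x - t * z \<in> pow_ann k" using that unfolding pow_ann_def by (simp add: algebra_simps)
    moreover have "t * z \<in> pow_ideal 1" unfolding mem_pow_ideal by auto
    ultimately have "(x - t * z) + t * z \<in> pow_ideal 1"
      using pow_ann_subset_pow_ideal_1[OF assms] ring_ideal_add[OF ring_ideal_pow_ideal] by blast
    then show ?thesis by simp
  qed
  then show ?thesis by auto
qed

lemma card_pow_ideal_1_eq_pow_ann_mult:
  assumes "k < r"
  shows "card (pow_ideal 1) = card (pow_ann k) * card (pow_ideal (Suc k))"
proof -
  have "card (pow_ideal 1) = (\<Sum>y\<in>pow_ideal (Suc k). card {x \<in> pow_ideal 1. x * z ^ k = y})"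
    using sum.image_gen[of "pow_ideal 1" "\<lambda>_. 1::nat" "\<lambda>x. x * z ^ k"]
    unfolding image_mult_pow_ideal_1 by simp
  also have "\<dots> = (\<Sum>y\<in>pow_ideal (Suc k). card (pow_ann k))"
  proof (intro sum.cong refl)
    fix y assume "y \<in> pow_ideal (Suc k)"
    then obtain t where "y = t * z ^ Suc k" unfolding mem_pow_ideal by blast
    then have "y = t * z * z ^ k" by (simp add: mult.assoc)
    then show "card {x \<in> pow_ideal 1. x * z ^ k = y} = card (pow_ann k)"
      using fiber_mult_pow_ideal_1[OF assms, of t] card_fiber_mult_right[of "z ^ k" "t * z"]
      unfolding pow_ann_def by simp
  qed
  finally show ?thesis by simp
qed

lemma card_UNIV_eq_q_mult: "CARD('a) = q * card (pow_ideal 1)"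
  unfolding q_def pow_ideal_1 by (rule card_UNIV_eq_card_cosets_mult[OF ring_ideal_z])

lemma card_pow_ideal_eq_mult_Suc:
  assumes "k < r"
  shows "card (pow_ideal k) = q * card (pow_ideal (Suc k))"
proof -
  have "card (pow_ann k) * card (pow_ideal k) = q * card (pow_ideal 1)"
    by (simp only: card_UNIV_eq_pow_ann_mult[symmetric] card_UNIV_eq_q_mult)
  also have "\<dots> = card (pow_ann k) * (q * card (pow_ideal (Suc k)))"
    by (simp only: card_pow_ideal_1_eq_pow_ann_mult[OF assms] mult.left_commute)
  finally have eq: "card (pow_ann k) * card (pow_ideal k) = card (pow_ann k) * (q * card (pow_ideal (Suc k)))" .
  have "card (pow_ann k) \<noteq> 0" using card_pow_ann_pos[of k] by linarith
  with eq show ?thesis by simp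
qed

lemma card_pow_ideal: "k \<le> r \<Longrightarrow> card (pow_ideal k) = q ^ (r - k)"
proof (induction rule: inc_induct)
  case base
  then show ?case using pow_ideal_eq_0[of r] by simp
next
  case (step k)
  then have "r - k = Suc (r - Suc k)" by simp
  with step show ?case using card_pow_ideal_eq_mult_Suc[of k] by simp
qed

lemma card_UNIV_eq_power: "CARD('a) = q ^ r"
  using card_pow_ideal[of 0] pow_ideal_0 by simp

definition val :: "'a \<Rightarrow> nat" where "val \<beta> = (GREATEST k. k \<le> r \<and> \<beta> \<in> pow_ideal k)"

lemma val_le_r: "val \<beta> \<le> r"
  and mem_pow_ideal_val: "\<beta> \<in> pow_ideal (val \<beta>)"
  and le_val_if_mem_pow_ideal: "k \<le> r \<Longrightarrow> \<beta> \<in> pow_ideal k \<Longrightarrow> k \<le> val \<beta>"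
proof -
  let ?P = "\<lambda>k. k \<le> r \<and> \<beta> \<in> pow_ideal k"
  have "?P 0" using pow_ideal_0 by simp
  then have "?P (val \<beta>)" unfolding val_def by (rule GreatestI_nat) auto
  then show "val \<beta> \<le> r" "\<beta> \<in> pow_ideal (val \<beta>)" by auto
  show "k \<le> val \<beta>" if "k \<le> r" "\<beta> \<in> pow_ideal k"
    unfolding val_def using that by (intro Greatest_le_nat[of ?P k r]) auto
qed

lemma mem_pow_ideal_iff_le_val: "k \<le> r \<Longrightarrow> \<beta> \<in> pow_ideal k \<longleftrightarrow> k \<le> val \<beta>"
  using le_val_if_mem_pow_ideal mem_pow_ideal_val pow_ideal_antimono by blast

text \<open>Writing \<open>\<beta> = w * z ^ val \<beta>\<close>, the factor \<open>w\<close> is a unit unless \<open>\<beta> = 0\<close>.\<close>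
lemma card_solutions:
  "card {x. x * \<beta> = \<alpha>} =
    (if \<alpha> \<in> pow_ideal (val \<beta>) then card (pow_ann (val \<beta>)) else 0)"
proof -
  define j where "j = val \<beta>"
  obtain w where w: "\<beta> = w * z ^ j" using mem_pow_ideal_val unfolding j_def mem_pow_ideal by blast
  have "card {x. x * \<beta> = \<alpha>} = card {e. e * z ^ j = \<alpha>}"
  proof (cases "j = r")
    case True
    then show ?thesis using w z_power_r by simp
  next
    case False
    then have "\<not> Suc j \<le> val \<beta>" "Suc j \<le> r" using val_le_r[of \<beta>] unfolding j_def by auto
    then have "\<beta> \<notin> pow_ideal (Suc j)" using mem_pow_ideal_iff_le_val by blast
    then have "w \<notin> principal_ideal z"
      unfolding w mem_pow_ideal mem_principal_ideal by (auto simp: mult.assoc)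
    then obtain w' where w': "w * w' = 1" using unit_if_notin_principal_ideal_z by blast
    then have cancel: "c * w * w' = c" "c * w' * w = c" for c
      by (simp_all add: mult.assoc mult.commute[of w'])
    have "{x. x * \<beta> = \<alpha>} = (\<lambda>x. x * w) -` {e. e * z ^ j = \<alpha>}"
      by (auto simp: w mult.assoc)
    moreover have "inj (\<lambda>x. x * w)" by (rule injI) (metis cancel(1))
    moreover have "surj (\<lambda>x. x * w)" by (rule surjI[of _ "\<lambda>e. e * w'"]) (rule cancel(2))
    ultimately show ?thesis using card_vimage_inj[of "\<lambda>x. x * w" "{e. e * z ^ j = \<alpha>}"] by simp
  qed
  also have "\<dots> = (if \<alpha> \<in> pow_ideal j then card (pow_ann j) else 0)"
    by (auto simp: mem_pow_ideal pow_ann_def card_fiber_mult_right)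
  finally show ?thesis unfolding j_def .
qed

lemma card_solutions_telescoping:
  "real (card {x. x * \<beta> = \<alpha>}) =
     (\<Sum>k\<le>r. real (card (pow_ann k)) * of_bool (\<alpha> \<in> pow_ideal k \<and> \<beta> \<in> pow_ideal k))
   - (\<Sum>k<r. real (card (pow_ann k)) * of_bool (\<alpha> \<in> pow_ideal k \<and> \<beta> \<in> pow_ideal (Suc k)))"
proof -
  define g where "g k = real (card (pow_ann k)) * of_bool (\<alpha> \<in> pow_ideal k)" for k
  have "(\<Sum>k\<le>r. real (card (pow_ann k)) * of_bool (\<alpha> \<in> pow_ideal k \<and> \<beta> \<in> pow_ideal k))
      = (\<Sum>k\<le>r. if k \<le> val \<beta> then g k else 0)"
    unfolding g_def by (intro sum.cong) (auto simp: mem_pow_ideal_iff_le_val)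
  also have "\<dots> = (\<Sum>k\<in>{k\<in>{..r}. k \<le> val \<beta>}. g k)"
    using sum.inter_filter[of "{..r}" g "\<lambda>k. k \<le> val \<beta>"] by simp
  also have "{k\<in>{..r}. k \<le> val \<beta>} = {..val \<beta>}" using val_le_r[of \<beta>] by auto
  finally have sum1: "(\<Sum>k\<le>r. real (card (pow_ann k)) * of_bool (\<alpha> \<in> pow_ideal k \<and> \<beta> \<in> pow_ideal k))
      = (\<Sum>k\<le>val \<beta>. g k)" .
  have "(\<Sum>k<r. real (card (pow_ann k)) * of_bool (\<alpha> \<in> pow_ideal k \<and> \<beta> \<in> pow_ideal (Suc k)))
      = (\<Sum>k<r. if Suc k \<le> val \<beta> then g k else 0)"
    unfolding g_def by (intro sum.cong) (auto simp: mem_pow_ideal_iff_le_val Suc_le_eq)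
  also have "\<dots> = (\<Sum>k\<in>{k\<in>{..<r}. Suc k \<le> val \<beta>}. g k)"
    using sum.inter_filter[of "{..<r}" g "\<lambda>k. Suc k \<le> val \<beta>"] by simp
  also have "{k\<in>{..<r}. Suc k \<le> val \<beta>} = {..<val \<beta>}" using val_le_r[of \<beta>] by auto
  finally have sum2: "(\<Sum>k<r. real (card (pow_ann k)) * of_bool (\<alpha> \<in> pow_ideal k \<and> \<beta> \<in> pow_ideal (Suc k)))
      = (\<Sum>k<val \<beta>. g k)" .
  show ?thesis
    unfolding sum1 sum2 card_solutions g_def by (simp add: lessThan_Suc_atMost[symmetric])
qed

end

section \<open>Quadratic forms of relations\<close>

definition rel_form :: "('b::finite \<Rightarrow> real) \<Rightarrow> ('b \<Rightarrow> 'b \<Rightarrow> bool) \<Rightarrow> real" where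
  "rel_form f E = (\<Sum>w\<in>UNIV. \<Sum>w'\<in>UNIV. f w * f w' * of_bool (E w w'))"

lemma rel_form_top: "rel_form f (\<lambda>_ _. True) = (\<Sum>w\<in>UNIV. f w)\<^sup>2"
  unfolding rel_form_def by (simp add: power2_eq_square sum_product)

lemma rel_form_sum:
  "(\<Sum>w\<in>UNIV. \<Sum>w'\<in>UNIV. f w * f w' * (\<Sum>k\<in>K. a k * of_bool (E k w w'))) =
    (\<Sum>k\<in>K. a k * rel_form f (E k))"
  unfolding rel_form_def sum_distrib_left
  by (subst sum.swap, subst (2) sum.swap) (simp add: sum_distrib_left ac_simps)

text \<open>The form of an equivalence kernel is a sum of squares over the classes.\<close>
lemma rel_form_kernel_nonneg: "0 \<le> rel_form f (\<lambda>w w'. h w' = h w)"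
proof -
  define F where "F c = (\<Sum>w\<in>{w. h w = c}. f w)" for c
  have "rel_form f (\<lambda>w w'. h w' = h w) = (\<Sum>w\<in>UNIV. f w * F (h w))"
    unfolding rel_form_def F_def
    by (simp add: sum_distrib_left sum.inter_filter[symmetric] of_bool_def if_distrib cong: if_cong)
  also have "\<dots> = (\<Sum>c\<in>range h. \<Sum>w\<in>{w. h w = c}. f w * F c)"
    by (subst sum.image_gen[of UNIV _ h]) auto
  also have "\<dots> = (\<Sum>c\<in>range h. (F c)\<^sup>2)"
    unfolding F_def by (simp add: sum_distrib_right power2_eq_square)
  finally show ?thesis by (simp add: sum_nonneg)
qed

text \<open>Bound \<open>f w * f w'\<close> by \<open>(f w\<^sup>2 + f w'\<^sup>2) / 2\<close>; by symmetry of \<open>E\<close> both halves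
  contribute \<open>\<Sum>w. f w\<^sup>2 * deg w\<close>.\<close>
lemma rel_form_le:
  assumes sym: "\<And>w w'. E w w' \<longleftrightarrow> E w' w"
    and degree: "\<And>w. real (card {w'. E w w'}) \<le> N"
  shows "rel_form f E \<le> N * (\<Sum>w\<in>UNIV. (f w)\<^sup>2)"
proof -
  define D where "D = (\<Sum>w\<in>UNIV. \<Sum>w'\<in>UNIV. (f w)\<^sup>2 * of_bool (E w w'))"
  have "rel_form f E \<le> (\<Sum>w\<in>UNIV. \<Sum>w'\<in>UNIV. ((f w)\<^sup>2 / 2 + (f w')\<^sup>2 / 2) * of_bool (E w w'))"
    unfolding rel_form_def
  proof (intro sum_mono mult_right_mono)
    fix w w'
    show "f w * f w' \<le> (f w)\<^sup>2 / 2 + (f w')\<^sup>2 / 2"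
      using sum_squares_bound[of "f w" "f w'"] by (simp add: power2_eq_square)
  qed simp
  also have "\<dots> = D / 2 + (\<Sum>w\<in>UNIV. \<Sum>w'\<in>UNIV. (f w')\<^sup>2 * of_bool (E w w')) / 2"
    unfolding D_def
    by (simp only: distrib_right sum.distrib times_divide_eq_left sum_divide_distrib[symmetric])
  also have "(\<Sum>w\<in>UNIV. \<Sum>w'\<in>UNIV. (f w')\<^sup>2 * of_bool (E w w')) = D"
    unfolding D_def using sym by (subst sum.swap) simp
  also have "D / 2 + D / 2 = (\<Sum>w\<in>UNIV. (f w)\<^sup>2 * real (card {w'. E w w'}))"
    unfolding D_def by (simp add: sum_distrib_left[symmetric])
  also have "\<dots> \<le> (\<Sum>w\<in>UNIV. (f w)\<^sup>2 * N)"
    by (intro sum_mono mult_left_mono degree) simp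
  finally show ?thesis by (simp add: sum_distrib_left mult.commute)
qed

context finite_valuation
begin

definition pair_cong :: "nat \<Rightarrow> nat \<Rightarrow> 'a \<times> 'a \<Rightarrow> 'a \<times> 'a \<Rightarrow> bool" where
  "pair_cong i j w w' \<longleftrightarrow> fst w' - fst w \<in> pow_ideal i \<and> snd w' - snd w \<in> pow_ideal j"

lemma rel_form_pair_cong_nonneg: "0 \<le> rel_form f (pair_cong i j)"
proof -
  define h where "h w = ({fst w + x |x. x \<in> pow_ideal i}, {snd w + x |x. x \<in> pow_ideal j})"
    for w :: "'a \<times> 'a"
  have "pair_cong i j = (\<lambda>w w'. h w' = h w)"
    unfolding pair_cong_def h_def by (simp add: fun_eq_iff coset_eq_iff[OF ring_ideal_pow_ideal])
  then show ?thesis using rel_form_kernel_nonneg by simp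
qed

lemma rel_form_pair_cong_le:
  "rel_form f (pair_cong i j) \<le> real (card (pow_ideal i) * card (pow_ideal j)) * (\<Sum>w\<in>UNIV. (f w)\<^sup>2)"
proof (rule rel_form_le)
  show "pair_cong i j w w' \<longleftrightarrow> pair_cong i j w' w" for w w'
    unfolding pair_cong_def using ring_ideal_minus_commute[OF ring_ideal_pow_ideal] by blast
  fix w :: "'a \<times> 'a"
  have "{w'. pair_cong i j w w'} = (\<lambda>p. (fst w + fst p, snd w + snd p)) ` (pow_ideal i \<times> pow_ideal j)"
    unfolding pair_cong_def by (auto intro!: image_eqI[of _ _ "(fst _ - fst w, snd _ - snd w)"])
  also have "card \<dots> = card (pow_ideal i \<times> pow_ideal j)"
    by (rule card_image) (auto simp: inj_on_def)
  finally show "real (card {w'. pair_cong i j w w'}) \<le> real (card (pow_ideal i) * card (pow_ideal j))"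
    by (simp add: card_cartesian_product)
qed

lemma pair_cong_0: "pair_cong 0 0 = (\<lambda>_ _. True)"
  unfolding pair_cong_def pow_ideal_0 by simp

lemma card_solutions_form_eq:
  "(\<Sum>w\<in>UNIV. \<Sum>w'\<in>UNIV. f w * f w' * real (card {x. x * (snd w' - snd w) = fst w' - fst w})) =
     (\<Sum>k\<le>r. real (card (pow_ann k)) * rel_form f (pair_cong k k))
   - (\<Sum>k<r. real (card (pow_ann k)) * rel_form f (pair_cong k (Suc k)))"
proof -
  have "real (card {x. x * (snd w' - snd w) = fst w' - fst w}) =
     (\<Sum>k\<le>r. real (card (pow_ann k)) * of_bool (pair_cong k k w w'))
   - (\<Sum>k<r. real (card (pow_ann k)) * of_bool (pair_cong k (Suc k) w w'))" for w w'
    unfolding pair_cong_def by (rule card_solutions_telescoping)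
  then show ?thesis by (simp only: right_diff_distrib sum_subtractf rel_form_sum)
qed

lemma pow_ann_rel_form_pair_cong_le:
  assumes "1 \<le> k"
  shows "real (card (pow_ann k)) * rel_form f (pair_cong k k)
    \<le> real CARD('a) * real (card (pow_ideal 1)) * (\<Sum>w\<in>UNIV. (f w)\<^sup>2)"
proof -
  have "card (pow_ideal k) \<le> card (pow_ideal 1)"
    using pow_ideal_antimono[OF assms] by (intro card_mono) auto
  have "real (card (pow_ann k)) * real (card (pow_ideal k) * card (pow_ideal k))
      = real CARD('a) * real (card (pow_ideal k))"
    by (simp add: card_UNIV_eq_pow_ann_mult[of k])
  also have "\<dots> \<le> real CARD('a) * real (card (pow_ideal 1))"
    using \<open>card (pow_ideal k) \<le> card (pow_ideal 1)\<close> by simp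
  finally have bound: "real (card (pow_ann k)) * real (card (pow_ideal k) * card (pow_ideal k))
      \<le> real CARD('a) * real (card (pow_ideal 1))" .
  have "real (card (pow_ann k)) * rel_form f (pair_cong k k)
      \<le> real (card (pow_ann k)) * (real (card (pow_ideal k) * card (pow_ideal k)) * (\<Sum>w\<in>UNIV. (f w)\<^sup>2))"
    by (rule mult_left_mono[OF rel_form_pair_cong_le]) simp
  also have "\<dots> \<le> real CARD('a) * real (card (pow_ideal 1)) * (\<Sum>w\<in>UNIV. (f w)\<^sup>2)"
    unfolding mult.assoc[symmetric] by (rule mult_right_mono[OF bound]) (simp add: sum_nonneg)
  finally show ?thesis .
qed

lemma card_solutions_form_le:
  fixes f :: "'a \<times> 'a \<Rightarrow> real"
  assumes "(\<Sum>w\<in>UNIV. f w) = 0"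
  shows "(\<Sum>w\<in>UNIV. \<Sum>w'\<in>UNIV. f w * f w' * real (card {x. x * (snd w' - snd w) = fst w' - fst w}))
    \<le> real r * real CARD('a) * real (card (pow_ideal 1)) * (\<Sum>w\<in>UNIV. (f w)\<^sup>2)"
proof -
  let ?S = "\<lambda>k. real (card (pow_ann k)) * rel_form f (pair_cong k k)"
  have "(\<Sum>k<r. real (card (pow_ann k)) * rel_form f (pair_cong k (Suc k))) \<ge> 0"
    by (intro sum_nonneg mult_nonneg_nonneg rel_form_pair_cong_nonneg) simp
  then have "(\<Sum>w\<in>UNIV. \<Sum>w'\<in>UNIV. f w * f w' * real (card {x. x * (snd w' - snd w) = fst w' - fst w}))
      \<le> (\<Sum>k\<le>r. ?S k)"
    unfolding card_solutions_form_eq by linarith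
  also have "\<dots> = (\<Sum>k\<in>{1..r}. ?S k)"
  proof -
    have "{..r} = insert 0 {1..r}" by auto
    moreover have "?S 0 = 0" using assms by (simp add: pair_cong_0 rel_form_top)
    ultimately show ?thesis by simp
  qed
  also have "\<dots> \<le> (\<Sum>k\<in>{1..r}. real CARD('a) * real (card (pow_ideal 1)) * (\<Sum>w\<in>UNIV. (f w)\<^sup>2))"
    by (intro sum_mono pow_ann_rel_form_pair_cong_le) simp
  finally show ?thesis by simp
qed

end

section \<open>Matrices and characteristic polynomials\<close>

lemma poly_det: "poly (det A) x = det (\<chi> i j. poly (A $ i $ j) x)"
  unfolding det_def by (simp add: poly_sum poly_prod)

lemma poly_charpoly: "poly (charpoly M) x = det (mat x - M)"
  unfolding charpoly_def poly_det
  by (rule arg_cong[where f = det]) (simp add: vec_eq_iff mat_def)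

lemma mat_mult_vector: "mat c *v y = c *s (y :: 'a::comm_semiring_1 ^ 'n)"
  by (simp add: vec_eq_iff matrix_vector_mult_def mat_def if_distrib[of "\<lambda>t. t * _"] cong: if_cong)

lemma det_eq_0_iff_ker: "det A = 0 \<longleftrightarrow> (\<exists>y. y \<noteq> 0 \<and> A *v y = (0 :: real ^ 'n))"
  using invertible_det_nz[of A] invertible_left_inverse[of A] matrix_left_invertible_ker[of A]
  by blast

lemma charpoly_root_iff_eigenvector:
  "poly (charpoly M) l = 0 \<longleftrightarrow> (\<exists>y. y \<noteq> 0 \<and> M *v y = l *s y)"
  unfolding poly_charpoly det_eq_0_iff_ker matrix_vector_mult_diff_rdistrib mat_mult_vector
  by (simp add: eq_commute[of "M *v _"])

lemma sum_matrix_vector_mult: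
  assumes "\<And>c. (\<Sum>j\<in>UNIV. M $ j $ c) = a"
  shows "(\<Sum>i\<in>UNIV. (M *v y) $ i) = a * (\<Sum>i\<in>UNIV. y $ i)"
  unfolding matrix_vector_mult_def
  by (simp add: sum.swap[of _ UNIV] sum_distrib_left sum_distrib_right[symmetric] assms mult.commute)

lemma det_row_replace_by_sum_rows:
  "det (\<chi> i. if i = k then (\<Sum>j\<in>UNIV. row j A) else row i A) = det (A :: 'a::comm_ring_1 ^ 'n ^ 'n)"
proof -
  have "det (\<chi> i. if i = k then (\<Sum>j\<in>UNIV. row j A) else row i A) =
        (\<Sum>j\<in>UNIV. det (\<chi> i. if i = k then row j A else row i A))"
    by (rule det_linear_row_sum) simp
  also have "\<dots> = (\<Sum>j\<in>UNIV. if j = k then det A else 0)"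
  proof (rule sum.cong[OF refl])
    fix j
    show "det (\<chi> i. if i = k then row j A else row i A) = (if j = k then det A else 0)"
    proof (cases "j = k")
      case True
      have "(\<chi> i. if i = k then row j A else row i A) = A"
        using True by (simp add: vec_eq_iff row_def)
      with True show ?thesis by simp
    next
      case False
      then show ?thesis
        by (simp add: det_identical_rows[of k j] row_def vec_eq_iff)
    qed
  qed
  finally show ?thesis by simp
qed

definition charmat :: "real ^ 'n ^ 'n \<Rightarrow> real poly ^ 'n ^ 'n" where
  "charmat M = (\<chi> i j. (if i = j then [:0, 1:] else 0) - [:M $ i $ j:])"

text \<open>If every column of \<open>M\<close> sums to \<open>a\<close>, adding all rows of \<open>x I - M\<close> to row \<open>k\<close>
  turns it into \<open>(x - a)\<close> times the all-ones row.\<close>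
lemma charpoly_eq_linear_mult:
  assumes "\<And>c. (\<Sum>j\<in>UNIV. M $ j $ c) = a"
  shows "charpoly M = [:- a, 1:] * det (\<chi> i. if i = k then vec 1 else row i (charmat M))"
proof -
  have colsum: "(\<Sum>j\<in>UNIV. row j (charmat M)) = [:- a, 1:] *s vec 1"
  proof (rule iffD2[OF vec_eq_iff], rule allI)
    fix c
    have "(\<Sum>j\<in>UNIV. row j (charmat M)) $ c = [:0, 1:] - (\<Sum>j\<in>UNIV. [:M $ j $ c:])"
      by (simp add: sum_component row_def charmat_def sum_subtractf)
    also have "(\<Sum>j\<in>UNIV. [:M $ j $ c:]) = [:a:]"
      by (simp only: sum_to_poly assms)
    finally show "(\<Sum>j\<in>UNIV. row j (charmat M)) $ c = ([:- a, 1:] *s vec 1) $ c" by simp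
  qed
  have "charpoly M = det (\<chi> i. if i = k then (\<Sum>j\<in>UNIV. row j (charmat M)) else row i (charmat M))"
    unfolding det_row_replace_by_sum_rows charpoly_def charmat_def ..
  also have "\<dots> = det (\<chi> i. if i = k then [:- a, 1:] *s vec 1 else row i (charmat M))"
    unfolding colsum ..
  also have "\<dots> = [:- a, 1:] * det (\<chi> i. if i = k then vec 1 else row i (charmat M))"
    by (rule det_row_mul)
  finally show ?thesis .
qed

lemma poly_det_charmat_ones_row_neq_0:
  fixes M :: "real ^ 'n ^ 'n"
  assumes colsum: "\<And>c. (\<Sum>j\<in>UNIV. M $ j $ c) = a"
    and no_perp: "\<And>y. M *v y = a *s y \<Longrightarrow> (\<Sum>i\<in>UNIV. y $ i) = 0 \<Longrightarrow> y = 0"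
  shows "poly (det (\<chi> i. if i = k then vec 1 else row i (charmat M))) a \<noteq> 0"
proof
  let ?R = "(\<chi> i. if i = k then vec 1 else row i (mat a - M)) :: real ^ 'n ^ 'n"
  assume "poly (det (\<chi> i. if i = k then vec 1 else row i (charmat M))) a = 0"
  moreover have "poly (det (\<chi> i. if i = k then vec 1 else row i (charmat M))) a = det ?R"
    unfolding poly_det
    by (rule arg_cong[where f = det]) (simp add: vec_eq_iff row_def charmat_def mat_def)
  ultimately obtain y where y: "y \<noteq> 0" "?R *v y = 0" using det_eq_0_iff_ker by metis
  have "(?R *v y) $ k = (\<Sum>i\<in>UNIV. y $ i)" by (simp add: matrix_vector_mult_def)
  then have sum_y: "(\<Sum>i\<in>UNIV. y $ i) = 0" using y(2) by simp
  have rows: "(M *v y) $ i = a * y $ i" if "i \<noteq> k" for i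
  proof -
    have "(?R *v y) $ i = ((mat a - M) *v y) $ i"
      using that by (simp add: matrix_vector_mult_def row_def)
    then show ?thesis
      using y(2) by (simp add: matrix_vector_mult_diff_rdistrib mat_mult_vector)
  qed
  have "0 = (\<Sum>i\<in>UNIV. (M *v y) $ i)" using sum_y by (simp add: sum_matrix_vector_mult[OF colsum])
  also have "\<dots> = (M *v y) $ k + (\<Sum>i\<in>UNIV - {k}. (M *v y) $ i)" by (rule sum.remove) simp_all
  also have "(\<Sum>i\<in>UNIV - {k}. (M *v y) $ i) = a * ((\<Sum>i\<in>UNIV. y $ i) - y $ k)"
    by (simp add: rows sum_distrib_left[symmetric] sum_diff1)
  finally have row_k: "(M *v y) $ k = a * y $ k" using sum_y by simp
  have "M *v y = a *s y"
    unfolding vec_eq_iff by (metis row_k rows vector_smult_component)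
  with y(1) sum_y no_perp show False by blast
qed

lemma count_proots_charpoly_eq_1:
  fixes M :: "real ^ 'n ^ 'n"
  assumes colsum: "\<And>c. (\<Sum>j\<in>UNIV. M $ j $ c) = a"
    and no_perp: "\<And>y. M *v y = a *s y \<Longrightarrow> (\<Sum>i\<in>UNIV. y $ i) = 0 \<Longrightarrow> y = 0"
  shows "count (proots (charpoly M)) a = 1"
proof -
  fix k :: 'n
  define G where "G = det (\<chi> i. if i = k then vec 1 else row i (charmat M))"
  have factor: "charpoly M = [:- a, 1:] * G"
    unfolding G_def by (rule charpoly_eq_linear_mult[OF colsum])
  have "poly G a \<noteq> 0"
    unfolding G_def by (rule poly_det_charmat_ones_row_neq_0[OF colsum no_perp])
  then have "G \<noteq> 0" and order_G: "order a G = 0" by (auto intro: order_0I)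
  then have nonzero: "[:- a, 1:] * G \<noteq> 0" by (metis mult_eq_0_iff pCons_eq_0_iff zero_neq_one)
  have order_linear: "order a [:- a, 1:] = 1"
    using order_power_n_n[of a 1] by (simp only: power_one_right)
  show ?thesis
    unfolding factor count_proots[OF nonzero] order_mult[OF nonzero] order_linear order_G by simp
qed

lemma second_eigenvalue_le:
  fixes M :: "real ^ 'n ^ 'n"
  assumes roots: "\<And>l. poly (charpoly M) l = 0 \<Longrightarrow> l = a \<or> \<bar>l\<bar> \<le> B"
    and simple: "B < a \<Longrightarrow> count (proots (charpoly M)) a \<le> 1"
    and two_roots: "poly (charpoly M) b = 0" "poly (charpoly M) b' = 0" "b \<noteq> b'"
    and nonneg: "0 \<le> a" "0 \<le> B"
  shows "second_eigenvalue M \<le> B"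
proof -
  define L where "L = eigenvalues_desc M"
  have "charpoly M \<noteq> 0"
  proof
    assume "charpoly M = 0"
    then show False using roots[of "a + B + 1"] nonneg by simp
  qed
  then have set_L: "set L = {l. poly (charpoly M) l = 0}" and mset_L: "mset L = proots (charpoly M)"
    unfolding L_def eigenvalues_desc_def by simp_all
  have sorted: "sorted_wrt (\<ge>) L"
    unfolding L_def eigenvalues_desc_def by (simp add: sorted_wrt_rev)
  have root_L: "x = a \<or> \<bar>x\<bar> \<le> B" if "x \<in> set L" for x
    using roots that set_L by blast
  have "2 \<le> length L"
  proof -
    have "{b, b'} \<subseteq> set L" using set_L two_roots by auto
    then have "card {b, b'} \<le> card (set L)" by (intro card_mono) simp_all
    then show ?thesis using two_roots(3) card_length[of L] by simp
  qed
  then obtain x0 x1 xs where L: "L = x0 # x1 # xs" by (auto simp: numeral_2_eq_2 Suc_le_length_iff)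
  have "x1 \<le> B"
  proof (rule ccontr)
    assume "\<not> x1 \<le> B"
    then have "x1 = a" "B < a" using root_L[of x1] L by auto
    moreover have "x1 \<le> x0" using sorted L by simp
    ultimately have "x0 = a" using root_L[of x0] L by auto
    then have "2 \<le> count (mset L) a" using \<open>x1 = a\<close> L by simp
    then show False using simple \<open>B < a\<close> mset_L by simp
  qed
  moreover have "- last L \<le> B"
    using root_L[of "last L"] L nonneg by (cases "last L = a") auto
  ultimately show ?thesis
    unfolding second_eigenvalue_def L_def[symmetric] L by simp
qed

lemma sum_sq_matrix_vector_mult:
  fixes A :: "real ^ 'n ^ 'm"
  shows "(\<Sum>u\<in>UNIV. ((A *v y) $ u)\<^sup>2) =
    (\<Sum>w\<in>UNIV. \<Sum>w'\<in>UNIV. y $ w * y $ w' * (\<Sum>u\<in>UNIV. A $ u $ w * A $ u $ w'))"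
proof -
  have "(\<Sum>u\<in>UNIV. ((A *v y) $ u)\<^sup>2) =
      (\<Sum>u\<in>UNIV. \<Sum>w\<in>UNIV. \<Sum>w'\<in>UNIV. (A $ u $ w * y $ w) * (A $ u $ w' * y $ w'))"
    by (simp add: matrix_vector_mult_def power2_eq_square sum_product)
  also have "\<dots> = (\<Sum>w\<in>UNIV. \<Sum>w'\<in>UNIV. \<Sum>u\<in>UNIV. (A $ u $ w * y $ w) * (A $ u $ w' * y $ w'))"
    by (subst sum.swap, subst (2) sum.swap) (rule refl)
  also have "\<dots> = (\<Sum>w\<in>UNIV. \<Sum>w'\<in>UNIV. y $ w * y $ w' * (\<Sum>u\<in>UNIV. A $ u $ w * A $ u $ w'))"
    unfolding sum_distrib_left by (intro sum.cong refl) (simp add: mult_ac)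
  finally show ?thesis .
qed

section \<open>The sum-product graph\<close>

abbreviation SP :: "real ^ ('a::{comm_ring_1,finite} \<times> 'a) ^ ('a \<times> 'a)" where
  "SP \<equiv> sum_product_matrix"

lemma sum_product_neighbours:
  "{w. sum_product_adj v w} = (\<lambda>d. (snd v * d - fst v, d)) ` UNIV"
  unfolding sum_product_adj_def by (auto simp: algebra_simps image_iff intro!: exI[of _ "snd _"])

lemma sum_product_common_neighbours:
  "(\<Sum>u\<in>UNIV. SP $ u $ w * SP $ u $ w') =
    real (card {x. x * (snd w' - snd w) = fst w' - fst w})"
proof -
  have "{u. sum_product_adj u w \<and> sum_product_adj u w'} =
      (\<lambda>x. (x * snd w - fst w, x)) ` {x. x * (snd w' - snd w) = fst w' - fst w}"
  proof (intro set_eqI iffI)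
    fix u assume "u \<in> {u. sum_product_adj u w \<and> sum_product_adj u w'}"
    then have adj: "fst u + fst w = snd u * snd w" "fst u + fst w' = snd u * snd w'"
      unfolding sum_product_adj_def by auto
    have "snd u * (snd w' - snd w) = (fst u + fst w') - (fst u + fst w)"
      unfolding adj by (simp add: right_diff_distrib)
    moreover have "u = (snd u * snd w - fst w, snd u)"
      using adj(1) by (simp add: eq_diff_eq prod_eq_iff)
    ultimately show "u \<in> (\<lambda>x. (x * snd w - fst w, x)) ` {x. x * (snd w' - snd w) = fst w' - fst w}"
      by (auto intro!: image_eqI[of u _ "snd u"])
  next
    fix u assume "u \<in> (\<lambda>x. (x * snd w - fst w, x)) ` {x. x * (snd w' - snd w) = fst w' - fst w}"
    then obtain x where u: "u = (x * snd w - fst w, x)" and x: "x * (snd w' - snd w) = fst w' - fst w"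
      by blast
    have "x * snd w' = x * snd w + x * (snd w' - snd w)" by (simp add: algebra_simps)
    then show "u \<in> {u. sum_product_adj u w \<and> sum_product_adj u w'}"
      unfolding sum_product_adj_def u x by simp
  qed
  moreover have "inj (\<lambda>x. (x * snd w - fst w, x))" by (rule injI) simp
  ultimately have "card {u. sum_product_adj u w \<and> sum_product_adj u w'} =
      card {x. x * (snd w' - snd w) = fst w' - fst w}"
    by (simp add: card_image inj_on_subset)
  then show ?thesis by (simp add: sum_product_matrix_def of_bool_def[symmetric] Int_def)
qed

lemma sum_product_matrix_vector:
  "(SP *v y) $ v = (\<Sum>d\<in>UNIV. y $ (snd v * d - fst v, d))"
proof -
  have "(SP *v y) $ v = (\<Sum>w\<in>UNIV. if sum_product_adj v w then y $ w else 0)"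
    by (auto simp: matrix_vector_mult_def sum_product_matrix_def intro!: sum.cong)
  also have "\<dots> = (\<Sum>w\<in>{w. sum_product_adj v w}. y $ w)"
    using sum.inter_filter[of UNIV "\<lambda>w. y $ w" "sum_product_adj v"] by simp
  also have "\<dots> = (\<Sum>d\<in>UNIV. y $ (snd v * d - fst v, d))"
    unfolding sum_product_neighbours by (subst sum.reindex) (auto intro: injI)
  finally show ?thesis .
qed

lemma sum_product_row_sum:
  fixes v :: "'a::{comm_ring_1,finite} \<times> 'a"
  shows "(\<Sum>w\<in>UNIV. SP $ v $ w) = real CARD('a)"
  using sum_product_matrix_vector[of "vec 1" v] by (simp add: matrix_vector_mult_def)

lemma sum_product_column_sum:
  fixes v :: "'a::{comm_ring_1,finite} \<times> 'a"
  shows "(\<Sum>w\<in>UNIV. SP $ w $ v) = real CARD('a)"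
proof -
  have "SP $ w $ v = SP $ v $ w" for w :: "'a \<times> 'a"
    by (simp add: sum_product_matrix_def sum_product_adj_def add.commute mult.commute)
  then show ?thesis by (simp add: sum_product_row_sum)
qed

lemma sum_product_charpoly_root_card:
  "poly (charpoly (SP :: real ^ ('a::{comm_ring_1,finite} \<times> 'a) ^ ('a \<times> 'a))) (real CARD('a)) = 0"
  unfolding charpoly_root_iff_eigenvector
  by (intro exI[of _ "vec 1"]) (simp add: vec_eq_iff matrix_vector_mult_def sum_product_row_sum)

lemma sum_product_charpoly_root_0:
  "poly (charpoly (SP :: real ^ ('a::{comm_ring_1,finite} \<times> 'a) ^ ('a \<times> 'a))) 0 = 0"
proof -
  define y :: "real ^ ('a \<times> 'a)" where "y = (\<chi> w. of_bool (snd w = 0) - of_bool (snd w = 1))"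
  have "y $ (0, 0) = 1" unfolding y_def by simp
  then have "y \<noteq> 0" by auto
  moreover have "SP *v y = 0"
    by (simp add: vec_eq_iff sum_product_matrix_vector y_def sum_subtractf)
  ultimately show ?thesis unfolding charpoly_root_iff_eigenvector by auto
qed

context finite_valuation
begin

lemma card_UNIV_mult_card_pow_ideal_1: "CARD('a) * card (pow_ideal 1) = q ^ (2 * r - 1)"
proof -
  have "CARD('a) * card (pow_ideal 1) = q ^ r * q ^ (r - 1)"
    using card_UNIV_eq_power card_pow_ideal[of 1] r_pos by simp
  also have "\<dots> = q ^ (r + (r - 1))" by (simp only: power_add)
  also have "r + (r - 1) = 2 * r - 1" using r_pos by simp
  finally show ?thesis .
qed

lemma sum_product_perp_eigenvalue:
  assumes eigen: "(SP :: real ^ ('a \<times> 'a) ^ ('a \<times> 'a)) *v y = l *s y"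
    and "y \<noteq> 0" and perp: "(\<Sum>w\<in>UNIV. y $ w) = 0"
  shows "l\<^sup>2 \<le> real r * real q ^ (2 * r - 1)"
proof -
  have "l\<^sup>2 * (\<Sum>w\<in>UNIV. (y $ w)\<^sup>2) = (\<Sum>u\<in>UNIV. ((SP *v y) $ u)\<^sup>2)"
    unfolding eigen by (simp add: power_mult_distrib sum_distrib_left)
  also have "\<dots> \<le> real r * real CARD('a) * real (card (pow_ideal 1)) * (\<Sum>w\<in>UNIV. (y $ w)\<^sup>2)"
    unfolding sum_sq_matrix_vector_mult sum_product_common_neighbours
    by (rule card_solutions_form_le) (rule perp)
  also have "\<dots> = real r * real q ^ (2 * r - 1) * (\<Sum>w\<in>UNIV. (y $ w)\<^sup>2)"
    using arg_cong[OF card_UNIV_mult_card_pow_ideal_1, of real] by (simp add: mult.assoc)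
  finally have "l\<^sup>2 * (\<Sum>w\<in>UNIV. (y $ w)\<^sup>2) \<le> real r * real q ^ (2 * r - 1) * (\<Sum>w\<in>UNIV. (y $ w)\<^sup>2)" .
  moreover have "0 < (\<Sum>w\<in>UNIV. (y $ w)\<^sup>2)"
  proof -
    obtain w where "y $ w \<noteq> 0" using \<open>y \<noteq> 0\<close> by (auto simp: vec_eq_iff)
    then show ?thesis by (intro sum_pos2[of UNIV w]) auto
  qed
  ultimately show ?thesis by simp
qed

lemma sum_product_charpoly_root:
  assumes "poly (charpoly (SP :: real ^ ('a \<times> 'a) ^ ('a \<times> 'a))) l = 0"
  shows "l = real CARD('a) \<or> \<bar>l\<bar> \<le> sqrt (real r * real q ^ (2 * r - 1))"
proof -
  obtain y :: "real ^ ('a \<times> 'a)" where y: "y \<noteq> 0" "SP *v y = l *s y"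
    using assms unfolding charpoly_root_iff_eigenvector by blast
  have "real CARD('a) * (\<Sum>w\<in>UNIV. y $ w) = (\<Sum>u\<in>UNIV. (SP *v y) $ u)"
    by (rule sum_matrix_vector_mult[OF sum_product_column_sum, symmetric])
  also have "\<dots> = l * (\<Sum>w\<in>UNIV. y $ w)"
    unfolding y(2) by (simp add: sum_distrib_left)
  finally have sum_eq: "real CARD('a) * (\<Sum>w\<in>UNIV. y $ w) = l * (\<Sum>w\<in>UNIV. y $ w)" .
  show ?thesis
  proof (cases "(\<Sum>w\<in>UNIV. y $ w) = 0")
    case True
    then have "\<bar>l\<bar>\<^sup>2 \<le> real r * real q ^ (2 * r - 1)"
      using sum_product_perp_eigenvalue[OF y(2) y(1)] by simp
    then have "\<bar>l\<bar> \<le> sqrt (real r * real q ^ (2 * r - 1))" by (rule real_le_rsqrt)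
    then show ?thesis ..
  next
    case False
    then show ?thesis using sum_eq by simp
  qed
qed

lemma count_proots_sum_product_card:
  assumes "sqrt (real r * real q ^ (2 * r - 1)) < real CARD('a)"
  shows "count (proots (charpoly (SP :: real ^ ('a \<times> 'a) ^ ('a \<times> 'a)))) (real CARD('a)) = 1"
proof (rule count_proots_charpoly_eq_1[OF sum_product_column_sum])
  fix y :: "real ^ ('a \<times> 'a)"
  assume eigen: "SP *v y = real CARD('a) *s y" and perp: "(\<Sum>w\<in>UNIV. y $ w) = 0"
  show "y = 0"
  proof (rule ccontr)
    assume "y \<noteq> 0"
    with eigen have "(real CARD('a))\<^sup>2 \<le> real r * real q ^ (2 * r - 1)"
      using perp by (rule sum_product_perp_eigenvalue)
    then have "real CARD('a) \<le> sqrt (real r * real q ^ (2 * r - 1))" by (rule real_le_rsqrt)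
    with assms show False by simp
  qed
qed

lemma second_eigenvalue_sum_product_le:
  "second_eigenvalue (SP :: real ^ ('a \<times> 'a) ^ ('a \<times> 'a)) \<le> sqrt (real r * real q ^ (2 * r - 1))"
proof (rule second_eigenvalue_le[where a = "real CARD('a)" and b = 0 and b' = "real CARD('a)"])
  show "l = real CARD('a) \<or> \<bar>l\<bar> \<le> sqrt (real r * real q ^ (2 * r - 1))"
    if "poly (charpoly (SP :: real ^ ('a \<times> 'a) ^ ('a \<times> 'a))) l = 0" for l
    using that by (rule sum_product_charpoly_root)
  show "count (proots (charpoly (SP :: real ^ ('a \<times> 'a) ^ ('a \<times> 'a)))) (real CARD('a)) \<le> 1"
    if "sqrt (real r * real q ^ (2 * r - 1)) < real CARD('a)"
    using count_proots_sum_product_card[OF that] by simp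
qed (simp_all add: sum_product_charpoly_root_0 sum_product_charpoly_root_card)

end

theorem lemma3p2:
  fixes z :: "'a::{comm_ring_1,finite}" and q r :: nat
  assumes "finite_valuation_ring TYPE('a)"
    and "maximal_ideal (principal_ideal z)"
    and "q = card (quotient_cosets (principal_ideal z))"
    and "r = (LEAST k. z ^ k = 0)"
  shows "CARD('a \<times> 'a) = q ^ (2 * r)
    \<and> (\<forall>v. (\<Sum>w\<in>UNIV. (sum_product_matrix :: real ^ ('a \<times> 'a) ^ ('a \<times> 'a)) $ v $ w) = real (q ^ r))
    \<and> second_eigenvalue (sum_product_matrix :: real ^ ('a \<times> 'a) ^ ('a \<times> 'a))
        \<le> sqrt (2 * real r * real q ^ (2 * r - 1))"
proof -
  interpret R: finite_valuation z using assms(1,2) by unfold_locales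
  have q: "q = R.q" and r: "r = R.r" unfolding R.q_def R.r_def using assms(3,4) by simp_all
  have card: "CARD('a) = q ^ r" unfolding q r by (rule R.card_UNIV_eq_power)
  have "CARD('a \<times> 'a) = q ^ (2 * r)" by (simp add: card mult_2 power_add)
  moreover have "\<forall>v. (\<Sum>w\<in>UNIV. (SP :: real ^ ('a \<times> 'a) ^ ('a \<times> 'a)) $ v $ w) = real (q ^ r)"
    using sum_product_row_sum[where 'a = 'a] card by simp
  moreover have "second_eigenvalue (SP :: real ^ ('a \<times> 'a) ^ ('a \<times> 'a))
      \<le> sqrt (real r * real q ^ (2 * r - 1))"
    unfolding q r by (rule R.second_eigenvalue_sum_product_le)
  moreover have "sqrt (real r * real q ^ (2 * r - 1)) \<le> sqrt (2 * real r * real q ^ (2 * r - 1))"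
    by simp
  ultimately show ?thesis by (blast intro: order_trans)
qed

end
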